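(* Let $\alpha>0$, $d>0$ and $\beta\ge 1$. For every $(\theta_0,W_0)\in\Omega_\beta$ the system $$\dot\theta=F_1(\theta,W),\qquad \dot W=F_2(\theta,W),\qquad (\theta(0),W(0))=(\theta_0,W_0)$$ has a unique solution $(\theta,W)\in C^1(\mathbb{R})\times C^1(\mathbb{R})$ defined for all $t\in\mathbb{R}$ and taking values in $\Omega_\beta$.
   Context: Fix parameters $\alpha>0$, $d>0$, $\beta\ge1$. Let $\theta_\beta=\arctan(\beta^{-1/2})\in(0,\pi/2)$, the unique $\theta\in(0,\pi/2)$ with $\beta^{1/2}\sin\theta-\cos\theta=0$. Let $\Omega_\beta=\{(\theta,W)\in\mathbb{R}^2:\ 0<\theta<\pi/2,\ W\in\mathbb{R},\ (\theta,W)\neq(\theta_\beta,0)\}$. Put $D_\beta(\theta,W)=\frac{d^2}{\beta}(\beta^{1/2}\sin\theta-\cos\theta)^2+W^2$ (positive on $\Omega_\beta$) and $$F_1(\theta,W)=\frac{\alpha\beta^{1/2}W}{D_\beta(\theta,W)^{3/2}},\qquad F_2(\theta,W)=\frac{\beta^{3/2}\sin\theta-\cos\theta}{d\sin\theta\cos\theta}-\frac{\alpha d^2(\sin\theta+\beta^{1/2}\cos\theta)(\beta^{1/2}\sin\theta-\cos\theta)}{\beta^{1/2}D_\beta(\theta,W)^{3/2}}.$$ (This system describes two coaxial circular vortex filaments of radii $R_1=d\beta^{-1/2}\cos\theta$, $R_2=d\sin\theta$ and axial separation $W$.) *)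

theory Defs
  imports "HOL-Analysis.Analysis"
begin

definition theta_beta :: "real \<Rightarrow> real" where
  "theta_beta \<beta> = arctan (1 / sqrt \<beta>)"

definition Omega_beta :: "real \<Rightarrow> (real \<times> real) set" where
  "Omega_beta \<beta> = {(\<theta>, W). 0 < \<theta> \<and> \<theta> < pi / 2 \<and> (\<theta>, W) \<noteq> (theta_beta \<beta>, 0)}"

definition D_beta :: "real \<Rightarrow> real \<Rightarrow> real \<Rightarrow> real \<Rightarrow> real" where
  "D_beta d \<beta> \<theta> W = d^2 / \<beta> * (sqrt \<beta> * sin \<theta> - cos \<theta>)^2 + W^2"

definition F1 :: "real \<Rightarrow> real \<Rightarrow> real \<Rightarrow> real \<Rightarrow> real \<Rightarrow> real" where
  "F1 \<alpha> d \<beta> \<theta> W = \<alpha> * sqrt \<beta> * W / (D_beta d \<beta> \<theta> W) powr (3/2)"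

definition F2 :: "real \<Rightarrow> real \<Rightarrow> real \<Rightarrow> real \<Rightarrow> real \<Rightarrow> real" where
  "F2 \<alpha> d \<beta> \<theta> W =
     (\<beta> powr (3/2) * sin \<theta> - cos \<theta>) / (d * sin \<theta> * cos \<theta>)
     - \<alpha> * d^2 * (sin \<theta> + sqrt \<beta> * cos \<theta>) * (sqrt \<beta> * sin \<theta> - cos \<theta>)
       / (sqrt \<beta> * (D_beta d \<beta> \<theta> W) powr (3/2))"

definition C1_functions :: "(real \<Rightarrow> real) set" where
  "C1_functions = {f. (\<forall>t. f differentiable (at t)) \<and> continuous_on UNIV (deriv f)}"

end

theory Submission
  imports Defs
begin

text \<open>The function \<open>H(\<theta>, W) = G(\<theta>) + \<alpha> \<surd>\<beta> / \<surd>D\<^sub>\<beta>(\<theta>, W)\<close>, where the potential \<open>G\<close> is an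
  antiderivative of the first term of \<open>F\<^sub>2\<close>, is a Hamiltonian of the system. \<open>G\<close> tends to \<open>+\<infinity>\<close>
  at \<open>\<theta> = 0\<close> and \<open>\<theta> = \<pi>/2\<close>, and the second term at the excluded point \<open>(\<theta>\<^sub>\<beta>, 0)\<close>, so each
  sublevel set \<open>{H \<le> H\<^sub>0}\<close> of \<open>\<Omega>\<^sub>\<beta>\<close> lies in the interior of a closed box \<open>a \<le> \<theta> \<le> b, D\<^sub>\<beta> \<ge> \<delta>\<close>
  contained in \<open>\<Omega>\<^sub>\<beta>\<close>. Modifying the field outside this box makes it bounded and Lipschitz on
  bounded sets, so the modified system has a global solution (Picard iteration in an exponentially
  weighted sup norm). By conservation of \<open>H\<close> this solution never leaves the level set of its
  initial point, hence stays in the box, where it solves the original system. Every solution in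
  \<open>\<Omega>\<^sub>\<beta>\<close> also stays in the box, so uniqueness follows from Gronwall's inequality for the
  modified field.\<close>

section \<open>Global solutions of autonomous ODEs\<close>

lemma norm_diff_le_of_deriv_le:
  fixes F :: "real \<Rightarrow> 'a::banach"
  assumes "a \<le> b"
    and F: "\<And>s. s \<in> {a..b} \<Longrightarrow> (F has_vector_derivative F' s) (at s within {a..b})"
    and G: "\<And>s. s \<in> {a..b} \<Longrightarrow> (G has_real_derivative G' s) (at s within {a..b})"
    and le: "\<And>s. s \<in> {a..b} \<Longrightarrow> norm (F' s) \<le> G' s"
  shows "norm (F b - F a) \<le> G b - G a"
proof -
  have F': "(F' has_integral (F b - F a)) {a..b}"
    by (rule fundamental_theorem_of_calculus) (use assms in auto)
  have G': "(G' has_integral (G b - G a)) {a..b}"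
    by (rule fundamental_theorem_of_calculus)
       (use assms in \<open>auto simp: has_real_derivative_iff_has_vector_derivative\<close>)
  have "norm (integral {a..b} F') \<le> integral {a..b} G'"
    using integral_norm_bound_integral[OF has_integral_integrable[OF F'] has_integral_integrable[OF G'] le] .
  then show ?thesis using F' G' by (simp add: integral_unique)
qed

lemma norm_le_of_deriv_le_abs:
  fixes F :: "real \<Rightarrow> 'a::banach"
  assumes F: "\<And>s. (F has_vector_derivative F' s) (at s)" and "F 0 = 0"
    and K: "\<And>u. (K has_real_derivative k u) (at u)" and "K 0 = 0"
    and le: "\<And>s. norm (F' s) \<le> k \<bar>s\<bar>"
  shows "norm (F t) \<le> K \<bar>t\<bar>"
proof (cases "0 \<le> t")
  case True
  have le': "norm (F' s) \<le> k s" if "0 \<le> s" for s using le[of s] that by simp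
  have "norm (F t - F 0) \<le> K t - K 0"
    by (rule norm_diff_le_of_deriv_le[OF True, where F'=F' and G'=k])
       (use F K le' in \<open>auto intro: has_vector_derivative_at_within DERIV_subset\<close>)
  then show ?thesis using True assms by simp
next
  case False
  have K': "((\<lambda>s. - K (- s)) has_real_derivative k (- s)) (at s)" for s
    using DERIV_chain2[OF K, of "uminus" "-1" s] DERIV_minus
    by (fastforce intro!: derivative_eq_intros)
  have le': "norm (F' s) \<le> k (- s)" if "s \<le> 0" for s using le[of s] that by simp
  have "norm (F 0 - F t) \<le> - K (- 0) - - K (- t)"
    by (rule norm_diff_le_of_deriv_le[where F'=F' and G'="\<lambda>s. k (- s)"])
       (use False F K' le' in \<open>auto intro: has_vector_derivative_at_within DERIV_subset\<close>)
  then show ?thesis using False assms by (simp add: norm_minus_commute)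
qed

definition integral_from_0 :: "(real \<Rightarrow> 'a::banach) \<Rightarrow> real \<Rightarrow> 'a" where
  "integral_from_0 h t = (if 0 \<le> t then integral {0..t} h else - integral {t..0} h)"

lemma integral_from_0_0 [simp]: "integral_from_0 h 0 = 0"
  by (simp add: integral_from_0_def)

lemma integral_from_0_has_vector_derivative:
  fixes h :: "real \<Rightarrow> 'a::banach"
  assumes h: "continuous_on UNIV h"
  shows "(integral_from_0 h has_vector_derivative h t) (at t)"
proof -
  define M where "M = \<bar>t\<bar> + 1"
  define I where "I s = integral {-M..s} h" for s
  have "(I has_vector_derivative h t) (at t within {-M..M})"
    unfolding I_def
    by (rule integral_has_vector_derivative) (use h M_def in \<open>auto intro: continuous_on_subset\<close>)
  moreover have "at t within {-M..M} = at t"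
    by (rule at_within_interior) (auto simp: M_def)
  ultimately have "((\<lambda>s. I s - I 0) has_vector_derivative h t) (at t)"
    using has_vector_derivative_diff[OF _ has_vector_derivative_const[of "I 0"]] by simp
  then show ?thesis
  proof (rule has_vector_derivative_transform_within_open[of _ _ _ "ball t 1"])
    fix s assume s: "s \<in> ball t 1"
    have int: "h integrable_on {u..v}" for u v
      by (rule integrable_continuous_interval) (use h in \<open>auto intro: continuous_on_subset\<close>)
    show "I s - I 0 = integral_from_0 h s"
    proof (cases "0 \<le> s")
      case True
      have "integral {-M..0} h + integral {0..s} h = integral {-M..s} h"
        by (rule Henstock_Kurzweil_Integration.integral_combine) (use True int M_def in auto)
      then show ?thesis using True by (auto simp: integral_from_0_def I_def algebra_simps)
    next
      case False
      have "integral {-M..s} h + integral {s..0} h = integral {-M..0} h"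
        by (rule Henstock_Kurzweil_Integration.integral_combine)
           (use False int s M_def in \<open>auto simp: dist_real_def\<close>)
      then show ?thesis using False by (auto simp: integral_from_0_def I_def algebra_simps)
    qed
  qed auto
qed

definition picard :: "('a \<Rightarrow> 'a) \<Rightarrow> 'a \<Rightarrow> (real \<Rightarrow> 'a) \<Rightarrow> real \<Rightarrow> 'a::banach" where
  "picard f x0 x t = x0 + integral_from_0 (\<lambda>s. f (x s)) t"

lemma picard_has_vector_derivative:
  assumes "continuous_on UNIV f" "continuous_on UNIV x"
  shows "(picard f x0 x has_vector_derivative f (x t)) (at t)"
proof -
  have "continuous_on UNIV (\<lambda>s. f (x s))" using continuous_on_compose2[OF assms] by auto
  from integral_from_0_has_vector_derivative[OF this] show ?thesis
    unfolding picard_def by (rule has_vector_derivative_add[OF has_vector_derivative_const, simplified])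
qed

lemma norm_picard_le:
  assumes "continuous_on UNIV f" "continuous_on UNIV x" "\<And>z. norm (f z) \<le> C"
  shows "norm (picard f x0 x t) \<le> norm x0 + C * \<bar>t\<bar>"
proof -
  have "((\<lambda>t. picard f x0 x t - x0) has_vector_derivative f (x s)) (at s)" for s
    using has_vector_derivative_diff[OF picard_has_vector_derivative[OF assms(1,2)] has_vector_derivative_const]
    by simp
  then have "norm (picard f x0 x t - x0) \<le> C * \<bar>t\<bar>"
    by (rule norm_le_of_deriv_le_abs[where K="\<lambda>u. C * u" and k="\<lambda>_. C"])
       (simp_all add: picard_def assms(3) DERIV_cmult_Id)
  then show ?thesis using norm_triangle_ineq2[of "picard f x0 x t" x0] by linarith
qed

lemma norm_picard_diff_le:
  fixes f :: "'a::banach \<Rightarrow> 'a"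
  assumes lip: "L-lipschitz_on UNIV f" and "L \<le> l"
    and x: "continuous_on UNIV x" and y: "continuous_on UNIV y"
    and xy: "\<And>s. norm (x s - y s) \<le> \<rho> * exp (2 * l * \<bar>s\<bar>)"
  shows "norm (picard f x0 x t - picard f x0 y t) \<le> \<rho> * (exp (2 * l * \<bar>t\<bar>) - 1) / 2"
proof -
  have f: "continuous_on UNIV f" using lip by (rule lipschitz_on_continuous_on)
  have "0 \<le> \<rho>" using order_trans[OF norm_ge_zero xy[of 0]] by simp
  have "norm (f (x s) - f (y s)) \<le> \<rho> * l * exp (2 * l * \<bar>s\<bar>)" for s
  proof -
    have "norm (f (x s) - f (y s)) \<le> L * norm (x s - y s)"
      using lipschitz_on_normD[OF lip] by simp
    also have "\<dots> \<le> l * (\<rho> * exp (2 * l * \<bar>s\<bar>))"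
      using xy[of s] \<open>L \<le> l\<close> lipschitz_on_nonneg[OF lip] \<open>0 \<le> \<rho>\<close>
      by (intro mult_mono) auto
    finally show ?thesis by (simp add: algebra_simps)
  qed
  then show ?thesis
    by (intro norm_le_of_deriv_le_abs[where F'="\<lambda>s. f (x s) - f (y s)"
          and K="\<lambda>u. \<rho> * (exp (2 * l * u) - 1) / 2" and k="\<lambda>u. \<rho> * l * exp (2 * l * u)"]
        has_vector_derivative_diff picard_has_vector_derivative f x y)
       (auto intro!: derivative_eq_intros simp: picard_def)
qed

lemma norm_weighted_picard_le:
  fixes f :: "'a::banach \<Rightarrow> 'a"
  assumes "0 < l" "continuous_on UNIV f" "continuous_on UNIV x" "\<And>z. norm (f z) \<le> C"
  shows "norm (exp (- (2 * l * \<bar>t\<bar>)) *\<^sub>R picard f x0 x t) \<le> norm x0 + C / (2 * l)"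
proof -
  have "2 * l * \<bar>t\<bar> \<le> exp (2 * l * \<bar>t\<bar>)"
    using exp_ge_add_one_self[of "2 * l * \<bar>t\<bar>"] by linarith
  then have "\<bar>t\<bar> * exp (- (2 * l * \<bar>t\<bar>)) \<le> 1 / (2 * l)"
    using assms(1) by (simp add: exp_minus field_simps)
  have "norm (exp (- (2 * l * \<bar>t\<bar>)) *\<^sub>R picard f x0 x t) \<le> exp (- (2 * l * \<bar>t\<bar>)) * (norm x0 + C * \<bar>t\<bar>)"
    using norm_picard_le[OF assms(2-4)] by (simp add: mult_left_mono)
  also have "\<dots> = exp (- (2 * l * \<bar>t\<bar>)) * norm x0 + C * (\<bar>t\<bar> * exp (- (2 * l * \<bar>t\<bar>)))"
    by (simp add: algebra_simps)
  also have "\<dots> \<le> 1 * norm x0 + C * (1 / (2 * l))"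
    using \<open>\<bar>t\<bar> * exp _ \<le> _\<close> assms(1) order_trans[OF norm_ge_zero assms(4)]
    by (intro add_mono mult_right_mono mult_left_mono) auto
  finally show ?thesis by simp
qed

lemma norm_weighted_picard_diff_le:
  fixes f :: "'a::banach \<Rightarrow> 'a"
  assumes "L-lipschitz_on UNIV f" "L \<le> l" "continuous_on UNIV x" "continuous_on UNIV y"
    and "\<And>s. norm (x s - y s) \<le> \<rho> * exp (2 * l * \<bar>s\<bar>)"
  shows "norm (exp (- (2 * l * \<bar>t\<bar>)) *\<^sub>R (picard f x0 x t - picard f x0 y t)) \<le> \<rho> / 2"
proof -
  have "0 \<le> \<rho>" using order_trans[OF norm_ge_zero assms(5)[of 0]] by simp
  have "norm (exp (- (2 * l * \<bar>t\<bar>)) *\<^sub>R (picard f x0 x t - picard f x0 y t))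
      \<le> exp (- (2 * l * \<bar>t\<bar>)) * (\<rho> * (exp (2 * l * \<bar>t\<bar>) - 1) / 2)"
    using norm_picard_diff_le[OF assms] by (simp add: mult_left_mono)
  also have "\<dots> = \<rho> * (1 - exp (- (2 * l * \<bar>t\<bar>))) / 2"
    by (simp add: algebra_simps exp_minus)
  also have "\<dots> \<le> \<rho> / 2" using \<open>0 \<le> \<rho>\<close> by (simp add: mult_left_le)
  finally show ?thesis .
qed

text \<open>The Picard operator is a contraction on the whole line for the weighted sup norm
  \<open>sup\<^sub>t exp (-2 l \<bar>t\<bar>) \<parallel>x t\<parallel>\<close> with \<open>l > L\<close>; a function \<open>x\<close> of finite weighted norm is represented
  by the bounded continuous function \<open>t \<mapsto> exp (-2 l \<bar>t\<bar>) x t\<close>.\<close>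

theorem lipschitz_ode_global_solution:
  fixes f :: "'a::banach \<Rightarrow> 'a"
  assumes lip: "L-lipschitz_on UNIV f" and bnd: "\<And>x. norm (f x) \<le> C"
  shows "\<exists>x. x 0 = x0 \<and> (\<forall>t. (x has_vector_derivative f (x t)) (at t))"
proof -
  define l where "l = L + 1"
  have "0 \<le> L" using lip lipschitz_on_nonneg by blast
  then have "0 < l" "L \<le> l" by (auto simp: l_def)
  have f: "continuous_on UNIV f" using lip by (rule lipschitz_on_continuous_on)
  define w where "w t = exp (- (2 * l * \<bar>t\<bar>))" for t :: real
  define X where "X y t = exp (2 * l * \<bar>t\<bar>) *\<^sub>R apply_bcontfun y t" for y :: "real \<Rightarrow>\<^sub>C 'a" and t
  have X: "continuous_on UNIV (X y)" for y
    unfolding X_def by (intro continuous_intros) auto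
  have P: "(picard f x0 (X y) has_vector_derivative f (X y t)) (at t)" for y t
    by (rule picard_has_vector_derivative[OF f X])
  have "(\<lambda>t. w t *\<^sub>R picard f x0 (X y) t) \<in> bcontfun" for y
  proof (rule bcontfun_normI)
    show "continuous_on UNIV (\<lambda>t. w t *\<^sub>R picard f x0 (X y) t)"
      using P has_vector_derivative_continuous unfolding w_def
      by (intro continuous_intros continuous_at_imp_continuous_on) blast
    show "norm (w t *\<^sub>R picard f x0 (X y) t) \<le> norm x0 + C / (2 * l)" for t
      unfolding w_def by (rule norm_weighted_picard_le[OF \<open>0 < l\<close> f X bnd])
  qed
  then have Q: "apply_bcontfun (Bcontfun (\<lambda>t. w t *\<^sub>R picard f x0 (X y) t)) t = w t *\<^sub>R picard f x0 (X y) t"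
    for y t by (simp add: Bcontfun_inverse)
  define Q where "Q y = Bcontfun (\<lambda>t. w t *\<^sub>R picard f x0 (X y) t)" for y
  have "dist (Q y) (Q z) \<le> 1/2 * dist y z" for y z
  proof (rule dist_bound)
    have "norm (X y s - X z s) \<le> dist y z * exp (2 * l * \<bar>s\<bar>)" for s
      using dist_bounded[of y s z] by (simp add: X_def dist_norm flip: scaleR_diff_right)
    from norm_weighted_picard_diff_le[OF lip \<open>L \<le> l\<close> X X this]
    have "norm (w t *\<^sub>R (picard f x0 (X y) t - picard f x0 (X z) t)) \<le> dist y z / 2" for t
      unfolding w_def .
    then show "dist (apply_bcontfun (Q y) t) (apply_bcontfun (Q z) t) \<le> 1/2 * dist y z" for t
      by (simp add: Q_def Q dist_norm scaleR_diff_right)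
  qed
  then obtain y where "Q y = y"
    using Banach_fix[OF complete_UNIV UNIV_not_empty, of "1/2" Q] by auto
  have "X y t = picard f x0 (X y) t" for t
  proof -
    have "apply_bcontfun y t = w t *\<^sub>R picard f x0 (X y) t" using \<open>Q y = y\<close> Q by (metis Q_def)
    moreover have "exp (2 * l * \<bar>t\<bar>) * w t = 1" by (simp add: w_def exp_minus)
    ultimately show ?thesis by (simp only: X_def scaleR_scaleR scaleR_one)
  qed
  then have fixpoint: "picard f x0 (X y) = X y" by (rule ext[symmetric])
  have "picard f x0 (X y) 0 = x0" by (simp add: picard_def)
  then show ?thesis
    using P[of y] unfolding fixpoint by blast
qed

lemma gronwall_vanishing:
  fixes \<psi> :: "real \<Rightarrow> real"
  assumes \<psi>: "\<And>s. s \<in> {a..b} \<Longrightarrow> (\<psi> has_real_derivative \<psi>' s) (at s)"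
    and le: "\<And>s. s \<in> {a..b} \<Longrightarrow> \<bar>\<psi>' s\<bar> \<le> K * \<psi> s"
    and "\<tau> \<in> {a..b}" "\<psi> \<tau> = 0" "t \<in> {a..b}"
  shows "\<psi> t \<le> 0"
proof (cases "\<tau> \<le> t")
  case True
  have "exp (- (K * t)) * \<psi> t \<le> exp (- (K * \<tau>)) * \<psi> \<tau>"
  proof (rule DERIV_nonpos_imp_nonincreasing[OF True])
    fix s assume "\<tau> \<le> s" "s \<le> t"
    then have s: "s \<in> {a..b}" using assms by auto
    have "((\<lambda>s. exp (- (K * s)) * \<psi> s) has_real_derivative
        exp (- (K * s)) * (\<psi>' s - K * \<psi> s)) (at s)"
      by (auto intro!: derivative_eq_intros \<psi>[OF s] simp: algebra_simps)
    moreover have "exp (- (K * s)) * (\<psi>' s - K * \<psi> s) \<le> 0"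
      using le[OF s] by (intro mult_nonneg_nonpos) auto
    ultimately show "\<exists>y. ((\<lambda>s. exp (- (K * s)) * \<psi> s) has_real_derivative y) (at s) \<and> y \<le> 0"
      by blast
  qed
  then show ?thesis using \<open>\<psi> \<tau> = 0\<close> by (simp add: mult_le_0_iff)
next
  case False
  have "exp (K * t) * \<psi> t \<le> exp (K * \<tau>) * \<psi> \<tau>"
  proof (rule DERIV_nonneg_imp_nondecreasing[of t \<tau> "\<lambda>s. exp (K * s) * \<psi> s"])
    show "t \<le> \<tau>" using False by simp
    fix s assume "t \<le> s" "s \<le> \<tau>"
    then have s: "s \<in> {a..b}" using assms by auto
    have "((\<lambda>s. exp (K * s) * \<psi> s) has_real_derivative exp (K * s) * (\<psi>' s + K * \<psi> s)) (at s)"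
      by (auto intro!: derivative_eq_intros \<psi>[OF s] simp: algebra_simps)
    moreover have "0 \<le> exp (K * s) * (\<psi>' s + K * \<psi> s)"
      using le[OF s] by (intro mult_nonneg_nonneg) auto
    ultimately show "\<exists>y. ((\<lambda>s. exp (K * s) * \<psi> s) has_real_derivative y) (at s) \<and> 0 \<le> y"
      by blast
  qed
  then show ?thesis using \<open>\<psi> \<tau> = 0\<close> by (simp add: mult_le_0_iff)
qed

lemma ode_solutions_eq_of_lipschitz:
  fixes x y :: "real \<Rightarrow> 'a::real_inner"
  assumes x: "\<And>t. t \<in> {a..b} \<Longrightarrow> (x has_vector_derivative x' t) (at t)"
    and y: "\<And>t. t \<in> {a..b} \<Longrightarrow> (y has_vector_derivative y' t) (at t)"
    and lip: "\<And>t. t \<in> {a..b} \<Longrightarrow> norm (x' t - y' t) \<le> L * norm (x t - y t)"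
    and "\<tau> \<in> {a..b}" "x \<tau> = y \<tau>" "t \<in> {a..b}"
  shows "x t = y t"
proof -
  define e where "e s = x s - y s" for s
  have "((\<lambda>s. e s \<bullet> e s) has_real_derivative 2 * (e s \<bullet> (x' s - y' s))) (at s)"
    if "s \<in> {a..b}" for s
  proof -
    define v where "v = x' s - y' s"
    have "(e has_derivative (\<lambda>h. h *\<^sub>R v)) (at s)"
      using has_vector_derivative_diff[OF x[OF that] y[OF that]]
      unfolding has_vector_derivative_def e_def v_def .
    from has_derivative_inner[OF this this]
    have "((\<lambda>s. e s \<bullet> e s) has_derivative (\<lambda>h. e s \<bullet> (h *\<^sub>R v) + (h *\<^sub>R v) \<bullet> e s)) (at s)" .
    moreover have "(\<lambda>h. e s \<bullet> (h *\<^sub>R v) + (h *\<^sub>R v) \<bullet> e s) = (*) (2 * (e s \<bullet> v))"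
      by (auto simp: fun_eq_iff inner_commute)
    ultimately show ?thesis by (simp add: has_field_derivative_def v_def)
  qed
  moreover have "\<bar>2 * (e s \<bullet> (x' s - y' s))\<bar> \<le> 2 * L * (e s \<bullet> e s)" if "s \<in> {a..b}" for s
  proof -
    have "\<bar>e s \<bullet> (x' s - y' s)\<bar> \<le> norm (e s) * norm (x' s - y' s)"
      by (rule Cauchy_Schwarz_ineq2)
    also have "\<dots> \<le> norm (e s) * (L * norm (e s))"
      using lip[OF that] by (intro mult_left_mono) (auto simp: e_def)
    finally show ?thesis by (simp add: power2_norm_eq_inner[symmetric] power2_eq_square algebra_simps)
  qed
  ultimately have "e t \<bullet> e t \<le> 0"
    by (intro gronwall_vanishing[where \<psi>="\<lambda>s. e s \<bullet> e s" and K="2 * L", OF _ _ assms(4) _ assms(6)])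
       (use assms(5) in \<open>auto simp: e_def\<close>)
  then have "e t = 0" by (metis inner_eq_zero_iff inner_ge_zero order_antisym)
  then show ?thesis by (simp add: e_def)
qed

lemma ode_solutions_eq_of_local_lipschitz:
  fixes f :: "'a::real_inner \<Rightarrow> 'a"
  assumes lip: "\<And>R. \<exists>L. L-lipschitz_on (cball 0 R) f"
    and x: "\<And>t. t \<in> {a..b} \<Longrightarrow> (x has_vector_derivative f (x t)) (at t)"
    and y: "\<And>t. t \<in> {a..b} \<Longrightarrow> (y has_vector_derivative f (y t)) (at t)"
    and "\<tau> \<in> {a..b}" "x \<tau> = y \<tau>" "t \<in> {a..b}"
  shows "x t = y t"
proof -
  have "continuous_on {a..b} x" "continuous_on {a..b} y"
    using has_vector_derivative_continuous[OF x] has_vector_derivative_continuous[OF y]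
    by (auto intro!: continuous_at_imp_continuous_on)
  then have "compact (x ` {a..b} \<union> y ` {a..b})"
    by (intro compact_Un compact_continuous_image) auto
  then obtain R where R: "\<And>p. p \<in> x ` {a..b} \<union> y ` {a..b} \<Longrightarrow> norm p \<le> R"
    using compact_imp_bounded bounded_pos by metis
  obtain L where L: "L-lipschitz_on (cball 0 R) f" using lip by blast
  show ?thesis
  proof (rule ode_solutions_eq_of_lipschitz[OF x y _ assms(4-6)])
    fix s assume "s \<in> {a..b}"
    then have "x s \<in> cball 0 R" "y s \<in> cball 0 R" using R by auto
    then show "norm (f (x s) - f (y s)) \<le> L * norm (x s - y s)"
      using lipschitz_on_normD[OF L] by blast
  qed
qed

lemma lipschitz_on_compose_closest_point:
  fixes f :: "'a::euclidean_space \<Rightarrow> 'b::metric_space"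
  assumes f: "L-lipschitz_on S f" and S: "convex S" "closed S" "S \<noteq> {}"
  shows "L-lipschitz_on UNIV (\<lambda>z. f (closest_point S z))"
proof (rule lipschitz_onI)
  show "0 \<le> L" using f lipschitz_on_nonneg by blast
  fix z z'
  have "dist (f (closest_point S z)) (f (closest_point S z')) \<le> L * dist (closest_point S z) (closest_point S z')"
    using closest_point_in_set[OF S(2,3)] by (intro lipschitz_onD[OF f]) auto
  also have "\<dots> \<le> L * dist z z'"
    by (intro mult_left_mono closest_point_lipschitz S \<open>0 \<le> L\<close>)
  finally show "dist (f (closest_point S z)) (f (closest_point S z')) \<le> L * dist z z'" .
qed

lemma ode_global_solution_of_compatible:
  assumes xs: "\<And>n t. \<bar>t\<bar> \<le> real n \<Longrightarrow> (xs n has_vector_derivative f (xs n t)) (at t)"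
    and agree: "\<And>n m t. \<bar>t\<bar> \<le> real n \<Longrightarrow> n \<le> m \<Longrightarrow> xs n t = xs m t"
    and xs0: "\<And>n. xs n 0 = x0"
  shows "\<exists>x. x 0 = x0 \<and> (\<forall>t. (x has_vector_derivative f (x t)) (at t))"
proof -
  define x where "x t = xs (nat \<lceil>\<bar>t\<bar>\<rceil>) t" for t
  have x_eq: "x t = xs m t" if "\<bar>t\<bar> \<le> real m" for t m
    unfolding x_def by (rule agree) (use that in linarith)+
  show ?thesis
  proof (intro exI conjI allI)
    show "x 0 = x0" using x_eq[of 0 0] xs0 by simp
    fix t :: real
    define M where "M = nat \<lceil>\<bar>t\<bar>\<rceil> + 1"
    have "\<bar>t\<bar> \<le> real M" unfolding M_def by linarith
    then have "(xs M has_vector_derivative f (x t)) (at t)"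
      using xs[of t M] x_eq[of t M] by simp
    then show "(x has_vector_derivative f (x t)) (at t)"
    proof (rule has_vector_derivative_transform_within_open[of _ _ _ "ball t 1"])
      fix s assume "s \<in> ball t 1"
      then have "\<bar>s\<bar> \<le> real M" unfolding M_def by (auto simp: dist_real_def) linarith
      then show "xs M s = x s" using x_eq by simp
    qed auto
  qed
qed

text \<open>The field composed with the projection onto \<open>cball x0 (C n)\<close> is globally Lipschitz, and
  its solution stays in that ball, hence solves the original equation, up to time \<open>n\<close>.\<close>

theorem local_lipschitz_bounded_ode_global_solution:
  fixes f :: "'a::euclidean_space \<Rightarrow> 'a"
  assumes lip: "\<And>R. \<exists>L. L-lipschitz_on (cball 0 R) f" and bnd: "\<And>x. norm (f x) \<le> C"
  shows "\<exists>x. x 0 = x0 \<and> (\<forall>t. (x has_vector_derivative f (x t)) (at t))"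
proof -
  have "0 \<le> C" using order_trans[OF norm_ge_zero bnd] .
  define B where "B n = cball x0 (C * real n)" for n :: nat
  have B: "convex (B n)" "closed (B n)" "B n \<noteq> {}" for n
    using \<open>0 \<le> C\<close> by (auto simp: B_def mult_less_0_iff)
  have "\<exists>L. L-lipschitz_on (B n) f" for n
  proof -
    have "B n \<subseteq> cball 0 (norm x0 + C * real n)"
      by (auto simp: B_def dist_norm)
         (metis add_le_cancel_left norm_minus_commute norm_triangle_sub order_trans)
    then show ?thesis using lip by (meson lipschitz_on_subset)
  qed
  then have "\<exists>L. L-lipschitz_on UNIV (\<lambda>z. f (closest_point (B n) z))" for n
    using lipschitz_on_compose_closest_point B by blast
  then have "\<exists>x. x 0 = x0 \<and> (\<forall>t. (x has_vector_derivative f (closest_point (B n) (x t))) (at t))" for n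
    using lipschitz_ode_global_solution[where C=C] bnd by blast
  then obtain xs where xs0: "\<And>n. xs n 0 = x0"
    and xs: "\<And>n t. (xs n has_vector_derivative f (closest_point (B n) (xs n t))) (at t)"
    by metis
  have "xs n t \<in> B n" if "\<bar>t\<bar> \<le> real n" for n t
  proof -
    have "norm (xs n t - x0) \<le> C * \<bar>t\<bar>"
      using norm_le_of_deriv_le_abs[where F="\<lambda>t. xs n t - x0" and K="\<lambda>u. C * u"]
      by (force intro!: derivative_eq_intros xs simp: xs0 bnd)
    also have "\<dots> \<le> C * real n" using that \<open>0 \<le> C\<close> by (rule mult_left_mono)
    finally show ?thesis by (simp add: B_def dist_norm norm_minus_commute)
  qed
  then have xs_solves: "(xs n has_vector_derivative f (xs n t)) (at t)" if "\<bar>t\<bar> \<le> real n" for n t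
    using xs[of n t] closest_point_self[of "xs n t" "B n"] that by simp
  moreover have "xs n t = xs m t" if "\<bar>t\<bar> \<le> real n" "n \<le> m" for n m t
    by (rule ode_solutions_eq_of_local_lipschitz[OF lip, where a="- real n" and b="real n" and \<tau>=0])
       (use that xs0 xs_solves[of _ n] xs_solves[of _ m] in auto)
  ultimately show ?thesis using xs0 by (rule ode_global_solution_of_compatible)
qed

section \<open>Functions that are bounded and Lipschitz\<close>

definition bounded_lipschitz_on :: "'a::metric_space set \<Rightarrow> ('a \<Rightarrow> real) \<Rightarrow> bool" where
  "bounded_lipschitz_on S f \<longleftrightarrow> (\<exists>L. L-lipschitz_on S f) \<and> (\<exists>B. \<forall>x\<in>S. \<bar>f x\<bar> \<le> B)"

lemma bounded_lipschitz_onE: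
  assumes "bounded_lipschitz_on S f"
  obtains L B where "L-lipschitz_on S f" "0 \<le> B" "\<And>x. x \<in> S \<Longrightarrow> \<bar>f x\<bar> \<le> B"
proof -
  obtain L B where "L-lipschitz_on S f" "\<And>x. x \<in> S \<Longrightarrow> \<bar>f x\<bar> \<le> B"
    using assms unfolding bounded_lipschitz_on_def by metis
  then show ?thesis using that[of L "max B 0"] by force
qed

lemma bounded_lipschitz_on_const: "bounded_lipschitz_on S (\<lambda>_. c)"
  unfolding bounded_lipschitz_on_def by (auto intro: lipschitz_on_constant)

lemma bounded_lipschitz_on_add:
  assumes "bounded_lipschitz_on S f" "bounded_lipschitz_on S g"
  shows "bounded_lipschitz_on S (\<lambda>x. f x + g x)"
proof -
  obtain L1 B1 L2 B2 where "L1-lipschitz_on S f" "\<And>x. x \<in> S \<Longrightarrow> \<bar>f x\<bar> \<le> B1"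
    and "L2-lipschitz_on S g" "\<And>x. x \<in> S \<Longrightarrow> \<bar>g x\<bar> \<le> B2"
    using assms by (metis bounded_lipschitz_onE)
  then have "(L1 + L2)-lipschitz_on S (\<lambda>x. f x + g x)" "\<forall>x\<in>S. \<bar>f x + g x\<bar> \<le> B1 + B2"
    by (auto intro: lipschitz_on_add abs_triangle_ineq[THEN order_trans] add_mono)
  then show ?thesis unfolding bounded_lipschitz_on_def by blast
qed

lemma bounded_lipschitz_on_uminus: "bounded_lipschitz_on S f \<Longrightarrow> bounded_lipschitz_on S (\<lambda>x. - f x)"
  unfolding bounded_lipschitz_on_def by auto

lemma bounded_lipschitz_on_diff:
  "bounded_lipschitz_on S f \<Longrightarrow> bounded_lipschitz_on S g \<Longrightarrow> bounded_lipschitz_on S (\<lambda>x. f x - g x)"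
  using bounded_lipschitz_on_add[of S f "\<lambda>x. - g x"] bounded_lipschitz_on_uminus[of S g] by simp

lemma bounded_lipschitz_on_mult:
  assumes "bounded_lipschitz_on S f" "bounded_lipschitz_on S g"
  shows "bounded_lipschitz_on S (\<lambda>x. f x * g x)"
proof -
  obtain L1 B1 L2 B2 where f: "L1-lipschitz_on S f" "0 \<le> B1" "\<And>x. x \<in> S \<Longrightarrow> \<bar>f x\<bar> \<le> B1"
    and g: "L2-lipschitz_on S g" "0 \<le> B2" "\<And>x. x \<in> S \<Longrightarrow> \<bar>g x\<bar> \<le> B2"
    using assms by (metis bounded_lipschitz_onE)
  have "(B1 * L2 + B2 * L1)-lipschitz_on S (\<lambda>x. f x * g x)"
  proof (rule lipschitz_onI)
    fix x y assume xy: "x \<in> S" "y \<in> S"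
    have "dist (f x * g x) (f y * g y) = \<bar>f x * (g x - g y) + g y * (f x - f y)\<bar>"
      by (simp add: dist_real_def algebra_simps)
    also have "\<dots> \<le> \<bar>f x\<bar> * \<bar>g x - g y\<bar> + \<bar>g y\<bar> * \<bar>f x - f y\<bar>"
      by (metis abs_mult abs_triangle_ineq)
    also have "\<dots> \<le> B1 * (L2 * dist x y) + B2 * (L1 * dist x y)"
      using lipschitz_onD[OF f(1) xy] lipschitz_onD[OF g(1) xy] f g xy
      by (intro add_mono mult_mono) (auto simp: dist_real_def)
    finally show "dist (f x * g x) (f y * g y) \<le> (B1 * L2 + B2 * L1) * dist x y"
      by (simp add: algebra_simps)
  qed (use f g lipschitz_on_nonneg[OF f(1)] lipschitz_on_nonneg[OF g(1)] in auto)
  moreover have "\<forall>x\<in>S. \<bar>f x * g x\<bar> \<le> B1 * B2"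
    using f g by (simp add: abs_mult mult_mono)
  ultimately show ?thesis unfolding bounded_lipschitz_on_def by blast
qed

lemma bounded_lipschitz_on_power2:
  "bounded_lipschitz_on S f \<Longrightarrow> bounded_lipschitz_on S (\<lambda>x. (f x)\<^sup>2)"
  using bounded_lipschitz_on_mult[of S f f] by (simp add: power2_eq_square)

lemma bounded_lipschitz_on_compose:
  assumes f: "bounded_lipschitz_on S f" and h: "M-lipschitz_on T h"
    and ST: "\<And>x. x \<in> S \<Longrightarrow> f x \<in> T"
  shows "bounded_lipschitz_on S (\<lambda>x. h (f x))"
proof (cases "S = {}")
  case True
  then show ?thesis by (auto simp: bounded_lipschitz_on_def lipschitz_on_def intro: exI[of _ 0])
next
  case False
  then obtain x0 where x0: "x0 \<in> S" by blast
  obtain L B where l: "L-lipschitz_on S f" and b: "\<And>x. x \<in> S \<Longrightarrow> \<bar>f x\<bar> \<le> B"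
    using f by (metis bounded_lipschitz_onE)
  have "(M * L)-lipschitz_on S (\<lambda>x. h (f x))"
    using lipschitz_on_compose[OF l lipschitz_on_subset[OF h]] ST by (auto simp: o_def)
  moreover have "\<bar>h (f x)\<bar> \<le> \<bar>h (f x0)\<bar> + M * (2 * B)" if "x \<in> S" for x
  proof -
    have "dist (h (f x)) (h (f x0)) \<le> M * dist (f x) (f x0)"
      using lipschitz_onD[OF h] ST that x0 by blast
    also have "\<dots> \<le> M * (2 * B)"
      using b[OF that] b[OF x0] lipschitz_on_nonneg[OF h]
      by (intro mult_left_mono) (auto simp: dist_real_def)
    finally show ?thesis by (simp add: dist_real_def)
  qed
  ultimately show ?thesis unfolding bounded_lipschitz_on_def by blast
qed

lemma bounded_lipschitz_on_fst:
  assumes "S \<subseteq> cball 0 R"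
  shows "bounded_lipschitz_on S (\<lambda>p::real \<times> real. fst p)"
  unfolding bounded_lipschitz_on_def
proof (intro conjI exI ballI)
  show "1-lipschitz_on S (\<lambda>p::real \<times> real. fst p)"
    by (rule lipschitz_onI) (simp_all add: dist_fst_le)
  fix p assume "p \<in> S"
  then show "\<bar>fst p\<bar> \<le> R"
    using assms norm_fst_le[of "fst p" "snd p"] by auto
qed

lemma bounded_lipschitz_on_snd:
  assumes "S \<subseteq> cball 0 R"
  shows "bounded_lipschitz_on S (\<lambda>p::real \<times> real. snd p)"
  unfolding bounded_lipschitz_on_def
proof (intro conjI exI ballI)
  show "1-lipschitz_on S (\<lambda>p::real \<times> real. snd p)"
    by (rule lipschitz_onI) (simp_all add: dist_snd_le)
  fix p assume "p \<in> S"
  then show "\<bar>snd p\<bar> \<le> R"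
    using assms norm_snd_le[of "snd p" "fst p"] by auto
qed

lemma lipschitz_on_sin: "1-lipschitz_on UNIV (sin :: real \<Rightarrow> real)"
proof (rule lipschitz_onI)
  fix x y :: real
  have "\<bar>sin x - sin y\<bar> = 2 * \<bar>sin ((x - y) / 2)\<bar> * \<bar>cos ((x + y) / 2)\<bar>"
    by (simp add: sin_diff_sin abs_mult)
  also have "\<dots> \<le> 2 * \<bar>(x - y) / 2\<bar> * 1"
    by (intro mult_mono abs_sin_x_le_abs_x) auto
  finally show "dist (sin x) (sin y) \<le> 1 * dist x y" by (simp add: dist_real_def)
qed simp

lemma lipschitz_on_cos: "1-lipschitz_on UNIV (cos :: real \<Rightarrow> real)"
proof (rule lipschitz_onI)
  fix x y :: real
  have "\<bar>cos x - cos y\<bar> = 2 * \<bar>sin ((x + y) / 2)\<bar> * \<bar>sin ((y - x) / 2)\<bar>"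
    by (simp add: cos_diff_cos abs_mult)
  also have "\<dots> \<le> 2 * 1 * \<bar>(y - x) / 2\<bar>"
    by (intro mult_mono abs_sin_x_le_abs_x) auto
  finally show "dist (cos x) (cos y) \<le> 1 * dist x y" by (simp add: dist_real_def)
qed simp

lemma lipschitz_on_inverse_atLeast:
  fixes m :: real
  assumes "0 < m"
  shows "(1 / m\<^sup>2)-lipschitz_on {m..} (\<lambda>x. 1 / x)"
proof (rule lipschitz_onI)
  fix x y assume xy: "x \<in> {m..}" "y \<in> {m..}"
  then have "\<bar>1/x - 1/y\<bar> = \<bar>y - x\<bar> / (x * y)"
    using assms by (simp add: field_simps abs_div)
  also have "\<dots> \<le> \<bar>y - x\<bar> / (m * m)"
    using xy assms by (intro divide_left_mono mult_mono) auto
  finally show "dist (1 / x) (1 / y) \<le> 1 / m\<^sup>2 * dist x y"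
    by (simp add: dist_real_def power2_eq_square abs_minus_commute)
qed simp

lemma lipschitz_on_sqrt_atLeast:
  fixes m :: real
  assumes "0 < m"
  shows "(1 / sqrt m)-lipschitz_on {m..} sqrt"
proof (rule lipschitz_onI)
  fix x y assume xy: "x \<in> {m..}" "y \<in> {m..}"
  then have s: "sqrt m \<le> sqrt x" "sqrt m \<le> sqrt y" "0 < sqrt m" using assms by auto
  have "(sqrt x - sqrt y) * (sqrt x + sqrt y) = x - y"
    using xy assms by (simp add: algebra_simps)
  then have "\<bar>sqrt x - sqrt y\<bar> * (sqrt x + sqrt y) = \<bar>x - y\<bar>"
    using s by (metis abs_mult abs_of_nonneg add_nonneg_nonneg less_imp_le order.trans)
  moreover have "\<bar>sqrt x - sqrt y\<bar> * sqrt m \<le> \<bar>sqrt x - sqrt y\<bar> * (sqrt x + sqrt y)"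
    using s by (intro mult_left_mono) (linarith, simp)
  ultimately show "dist (sqrt x) (sqrt y) \<le> 1 / sqrt m * dist x y"
    using s by (simp add: dist_real_def field_simps)
qed (use assms in simp)

lemma lipschitz_on_max: "1-lipschitz_on UNIV (\<lambda>x::real. max a x)"
  by (rule lipschitz_onI) (auto simp: dist_real_def)

lemma continuous_on_of_lipschitz_on_cball:
  fixes f :: "'a::real_normed_vector \<Rightarrow> 'b::metric_space"
  assumes "\<And>R. \<exists>L. L-lipschitz_on (cball 0 R) f"
  shows "continuous_on UNIV f"
proof -
  have "isCont f p" for p
  proof -
    obtain L where "L-lipschitz_on (cball 0 (norm p + 1)) f" using assms by blast
    then have "continuous_on (ball 0 (norm p + 1)) f"
      using lipschitz_on_continuous_on continuous_on_subset ball_subset_cball by blast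
    then show ?thesis by (rule continuous_on_interior) simp
  qed
  then show ?thesis by (simp add: continuous_at_imp_continuous_on)
qed

section \<open>The coaxial vortex system\<close>

lemma powr_three_halves:
  fixes x :: real
  assumes "0 \<le> x"
  shows "x powr (3/2) = x * sqrt x"
proof -
  have "x powr (3/2) = x powr (1 + 1/2)" by simp
  also have "\<dots> = x powr 1 * x powr (1/2)" by (rule powr_add)
  finally show ?thesis using assms by (cases "x = 0") (auto simp: powr_half_sqrt)
qed

lemma has_real_derivative_ln_one_plus_sin_div_cos:
  assumes "0 < sin \<theta>" "0 < cos \<theta>"
  shows "((\<lambda>x. ln ((1 + sin x) / cos x)) has_real_derivative 1 / cos \<theta>) (at \<theta>)"
proof -
  have "0 < 1 + sin \<theta>" using assms by simp
  then show ?thesis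
    using assms sin_cos_squared_add[of \<theta>]
    by (auto intro!: derivative_eq_intros simp: field_simps power2_eq_square)
       (smt (verit) mult_pos_pos)
qed

lemma has_real_derivative_ln_sin_div_one_plus_cos:
  assumes "0 < sin \<theta>" "0 < cos \<theta>"
  shows "((\<lambda>x. ln (sin x / (1 + cos x))) has_real_derivative 1 / sin \<theta>) (at \<theta>)"
proof -
  have "0 < 1 + cos \<theta>" using assms by simp
  then show ?thesis
    using assms sin_cos_squared_add[of \<theta>]
    by (auto intro!: derivative_eq_intros simp: field_simps power2_eq_square)
       (smt (verit) mult_pos_pos)
qed

lemma has_real_derivative_const_div_sqrt:
  fixes \<phi> :: "real \<Rightarrow> real"
  assumes "(\<phi> has_real_derivative \<phi>') (at t)" "0 < \<phi> t"
  shows "((\<lambda>t. c / sqrt (\<phi> t)) has_real_derivative - (c * \<phi>' / (2 * \<phi> t * sqrt (\<phi> t)))) (at t)"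
  using assms by (auto intro!: derivative_eq_intros simp: field_simps)

lemma ln_one_plus_sin_div_cos_ge:
  fixes \<theta> :: real
  assumes "0 \<le> sin \<theta>" "0 < cos \<theta>"
  shows "- ln (cos \<theta>) \<le> ln ((1 + sin \<theta>) / cos \<theta>)"
proof -
  have "1 / cos \<theta> \<le> (1 + sin \<theta>) / cos \<theta>" using assms by (simp add: divide_simps)
  then show ?thesis using assms by (simp add: ln_div)
qed

lemma ln_sin_div_one_plus_cos_le:
  assumes "0 < \<theta>" "\<theta> < pi/2"
  shows "ln (sin \<theta> / (1 + cos \<theta>)) \<le> ln \<theta>" "ln (sin \<theta> / (1 + cos \<theta>)) \<le> 0"
proof -
  have "0 < sin \<theta>" "0 < cos \<theta>" using assms by (auto intro: sin_gt_zero cos_gt_zero)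
  then have "sin \<theta> / (1 + cos \<theta>) \<le> sin \<theta>"
    by (simp add: divide_le_eq algebra_simps)
  then show "ln (sin \<theta> / (1 + cos \<theta>)) \<le> ln \<theta>"
    using sin_x_le_x[of \<theta>] assms \<open>0 < sin \<theta>\<close> \<open>0 < cos \<theta>\<close> by simp
  have "sin \<theta> \<le> 1 + cos \<theta>" using sin_le_one[of \<theta>] \<open>0 < cos \<theta>\<close> by linarith
  then show "ln (sin \<theta> / (1 + cos \<theta>)) \<le> 0" using \<open>0 < sin \<theta>\<close> \<open>0 < cos \<theta>\<close> by simp
qed

definition clamp :: "real \<Rightarrow> real \<Rightarrow> real \<Rightarrow> real" where
  "clamp a b x = max a (min b x)"

lemma lipschitz_on_clamp: "1-lipschitz_on UNIV (clamp a b)"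
  unfolding clamp_def by (rule lipschitz_onI) (auto simp: dist_real_def)

lemma clamp_sin_cos_bounds:
  assumes "0 < a" "a \<le> b" "b < pi/2"
  shows "0 < sin a" "sin a \<le> sin (clamp a b x)" "0 < cos b" "cos b \<le> cos (clamp a b x)"
    and "0 < sin (clamp a b x)" "0 < cos (clamp a b x)"
proof -
  have "a \<le> clamp a b x" "clamp a b x \<le> b" using assms(2) by (auto simp: clamp_def)
  then show "0 < sin a" "sin a \<le> sin (clamp a b x)" "0 < cos b" "cos b \<le> cos (clamp a b x)"
    using assms by (auto intro: sin_gt_zero cos_gt_zero sin_monotone_2pi_le cos_monotone_0_pi_le)
  then show "0 < sin (clamp a b x)" "0 < cos (clamp a b x)" by linarith+
qed

lemma bounded_lipschitz_on_sin_cos_clamp: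
  "bounded_lipschitz_on (cball 0 R) (\<lambda>p::real \<times> real. sin (clamp a b (fst p)))"
  "bounded_lipschitz_on (cball 0 R) (\<lambda>p::real \<times> real. cos (clamp a b (fst p)))"
proof -
  have "bounded_lipschitz_on (cball 0 R) (\<lambda>p::real \<times> real. clamp a b (fst p))"
    by (rule bounded_lipschitz_on_compose[OF bounded_lipschitz_on_fst lipschitz_on_clamp]) auto
  then show "bounded_lipschitz_on (cball 0 R) (\<lambda>p::real \<times> real. sin (clamp a b (fst p)))"
    "bounded_lipschitz_on (cball 0 R) (\<lambda>p::real \<times> real. cos (clamp a b (fst p)))"
    by (auto intro: bounded_lipschitz_on_compose lipschitz_on_sin lipschitz_on_cos)
qed

lemma C1_functionsI:
  assumes "\<And>t. (f has_real_derivative f' t) (at t)" "continuous_on UNIV f'"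
  shows "f \<in> C1_functions"
proof -
  have "deriv f = f'" using assms(1) by (simp add: fun_eq_iff DERIV_imp_deriv)
  then show ?thesis
    using assms by (auto simp: C1_functions_def real_differentiable_def)
qed

lemma has_real_derivative_fst:
  "(x has_vector_derivative v) (at t) \<Longrightarrow> ((\<lambda>t. fst (x t)) has_real_derivative fst v) (at t)"
  unfolding has_real_derivative_iff_has_vector_derivative has_vector_derivative_def
  by (drule has_derivative_fst) simp

lemma has_real_derivative_snd:
  "(x has_vector_derivative v) (at t) \<Longrightarrow> ((\<lambda>t. snd (x t)) has_real_derivative snd v) (at t)"
  unfolding has_real_derivative_iff_has_vector_derivative has_vector_derivative_def
  by (drule has_derivative_snd) simp

locale coaxial_vortices =
  fixes \<alpha> d \<beta> :: real
  assumes alpha_pos: "0 < \<alpha>" and d_pos: "0 < d" and beta_ge_1: "1 \<le> \<beta>"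
begin

lemma sqrt_beta: "0 < \<beta>" "0 < sqrt \<beta>" "sqrt \<beta> * sqrt \<beta> = \<beta>" "\<beta> powr (3/2) = \<beta> * sqrt \<beta>"
  using beta_ge_1 by (auto simp: powr_three_halves)

lemma Omega_betaD:
  assumes "(\<theta>, W) \<in> Omega_beta \<beta>"
  shows "0 < \<theta>" "\<theta> < pi/2" "0 < sin \<theta>" "0 < cos \<theta>"
  using assms by (auto simp: Omega_beta_def intro: sin_gt_zero cos_gt_zero)

lemma D_beta_theta_beta: "D_beta d \<beta> (theta_beta \<beta>) 0 = 0"
proof -
  have "sqrt \<beta> * sin (theta_beta \<beta>) = cos (theta_beta \<beta>)"
    using sqrt_beta by (simp add: theta_beta_def sin_arctan cos_arctan field_simps)
  then show ?thesis by (simp add: D_beta_def)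
qed

lemma D_beta_pos:
  assumes "(\<theta>, W) \<in> Omega_beta \<beta>"
  shows "0 < D_beta d \<beta> \<theta> W"
proof (rule ccontr)
  assume "\<not> 0 < D_beta d \<beta> \<theta> W"
  moreover have "0 \<le> d\<^sup>2 / \<beta> * (sqrt \<beta> * sin \<theta> - cos \<theta>)\<^sup>2" using sqrt_beta by simp
  ultimately have "W\<^sup>2 = 0" "d\<^sup>2 / \<beta> * (sqrt \<beta> * sin \<theta> - cos \<theta>)\<^sup>2 = 0"
    unfolding D_beta_def by (smt (verit) zero_le_power2)+
  then have "W = 0" and k: "sqrt \<beta> * sin \<theta> - cos \<theta> = 0"
    using sqrt_beta d_pos by auto
  note th = Omega_betaD[OF assms]
  have "tan \<theta> = 1 / sqrt \<beta>" using k th sqrt_beta by (simp add: tan_def field_simps)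
  then have "\<theta> = theta_beta \<beta>"
    unfolding theta_beta_def using arctan_tan[of \<theta>] th by simp
  with \<open>W = 0\<close> assms show False by (simp add: Omega_beta_def)
qed

lemma F1_eq_sqrt:
  "0 < D_beta d \<beta> \<theta> W \<Longrightarrow>
    F1 \<alpha> d \<beta> \<theta> W = \<alpha> * sqrt \<beta> * W / (D_beta d \<beta> \<theta> W * sqrt (D_beta d \<beta> \<theta> W))"
  by (simp add: F1_def powr_three_halves)

lemma F2_eq_sqrt:
  "0 < D_beta d \<beta> \<theta> W \<Longrightarrow>
    F2 \<alpha> d \<beta> \<theta> W = (\<beta> * sqrt \<beta> * sin \<theta> - cos \<theta>) / (d * sin \<theta> * cos \<theta>)
      - \<alpha> * d\<^sup>2 * (sin \<theta> + sqrt \<beta> * cos \<theta>) * (sqrt \<beta> * sin \<theta> - cos \<theta>)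
        / (sqrt \<beta> * (D_beta d \<beta> \<theta> W * sqrt (D_beta d \<beta> \<theta> W)))"
  by (simp add: F2_def powr_three_halves sqrt_beta)

text \<open>An antiderivative of the first term of \<open>F\<^sub>2\<close>.\<close>

definition potential :: "real \<Rightarrow> real" where
  "potential \<theta> = \<beta> * sqrt \<beta> / d * ln ((1 + sin \<theta>) / cos \<theta>) - 1 / d * ln (sin \<theta> / (1 + cos \<theta>))"

text \<open>A Hamiltonian of the system: \<open>F\<^sub>1 = -\<partial>H/\<partial>W\<close> and \<open>F\<^sub>2 = \<partial>H/\<partial>\<theta>\<close>.\<close>

definition hamiltonian :: "real \<Rightarrow> real \<Rightarrow> real" where
  "hamiltonian \<theta> W = potential \<theta> + \<alpha> * sqrt \<beta> / sqrt (D_beta d \<beta> \<theta> W)"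

lemma potential_has_real_derivative:
  assumes "0 < sin \<theta>" "0 < cos \<theta>"
  shows "(potential has_real_derivative (\<beta> * sqrt \<beta> * sin \<theta> - cos \<theta>) / (d * sin \<theta> * cos \<theta>)) (at \<theta>)"
proof -
  have "(potential has_real_derivative \<beta> * sqrt \<beta> / d * (1 / cos \<theta>) - 1 / d * (1 / sin \<theta>)) (at \<theta>)"
    unfolding potential_def
    by (intro DERIV_diff DERIV_cmult has_real_derivative_ln_one_plus_sin_div_cos
        has_real_derivative_ln_sin_div_one_plus_cos assms)
  then show ?thesis using assms d_pos by (simp add: field_simps)
qed

lemma D_beta_has_real_derivative:
  assumes "(\<theta> has_real_derivative \<theta>') (at t)" "(W has_real_derivative W') (at t)"
  shows "((\<lambda>t. D_beta d \<beta> (\<theta> t) (W t)) has_real_derivative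
    2 * d\<^sup>2 / \<beta> * (sqrt \<beta> * sin (\<theta> t) - cos (\<theta> t)) * (sin (\<theta> t) + sqrt \<beta> * cos (\<theta> t)) * \<theta>'
      + 2 * W t * W') (at t)"
  unfolding D_beta_def
  by (rule derivative_eq_intros assms refl)+ (simp add: algebra_simps power2_eq_square add_divide_distrib)

lemma hamiltonian_conserved:
  assumes \<theta>: "(\<theta> has_real_derivative F1 \<alpha> d \<beta> (\<theta> t) (W t)) (at t)"
    and W: "(W has_real_derivative F2 \<alpha> d \<beta> (\<theta> t) (W t)) (at t)"
    and \<Omega>: "(\<theta> t, W t) \<in> Omega_beta \<beta>"
  shows "((\<lambda>t. hamiltonian (\<theta> t) (W t)) has_real_derivative 0) (at t)"
proof -
  note th = Omega_betaD[OF \<Omega>]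
  define D where "D = D_beta d \<beta> (\<theta> t) (W t)"
  have "0 < D" using D_beta_pos[OF \<Omega>] by (simp add: D_def)
  define D' where "D' = 2 * d\<^sup>2 / \<beta> * (sqrt \<beta> * sin (\<theta> t) - cos (\<theta> t)) * (sin (\<theta> t) + sqrt \<beta> * cos (\<theta> t))
      * F1 \<alpha> d \<beta> (\<theta> t) (W t) + 2 * W t * F2 \<alpha> d \<beta> (\<theta> t) (W t)"
  have "((\<lambda>t. \<alpha> * sqrt \<beta> / sqrt (D_beta d \<beta> (\<theta> t) (W t))) has_real_derivative
      - (\<alpha> * sqrt \<beta> * D' / (2 * D * sqrt D))) (at t)"
    unfolding D_def D'_def
    by (rule has_real_derivative_const_div_sqrt[OF D_beta_has_real_derivative[OF \<theta> W]])
       (use \<open>0 < D\<close> D_def in simp)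
  moreover note DERIV_chain2[OF potential_has_real_derivative[OF th(3,4)] \<theta>]
  ultimately have "((\<lambda>t. hamiltonian (\<theta> t) (W t)) has_real_derivative
      (\<beta> * sqrt \<beta> * sin (\<theta> t) - cos (\<theta> t)) / (d * sin (\<theta> t) * cos (\<theta> t)) * F1 \<alpha> d \<beta> (\<theta> t) (W t)
      - \<alpha> * sqrt \<beta> * D' / (2 * D * sqrt D)) (at t)"
    unfolding hamiltonian_def by (auto dest: DERIV_add)
  moreover define s where "s = sqrt \<beta>"
  have s: "sqrt \<beta> = s" "\<beta> = s * s" "0 < s" using sqrt_beta by (auto simp: s_def)
  have F: "F1 \<alpha> d \<beta> (\<theta> t) (W t) = \<alpha> * s * W t / (D * sqrt D)"
    "F2 \<alpha> d \<beta> (\<theta> t) (W t) = (s * s * s * sin (\<theta> t) - cos (\<theta> t)) / (d * sin (\<theta> t) * cos (\<theta> t))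
      - \<alpha> * d\<^sup>2 * (sin (\<theta> t) + s * cos (\<theta> t)) * (s * sin (\<theta> t) - cos (\<theta> t)) / (s * (D * sqrt D))"
    using F1_eq_sqrt[of "\<theta> t" "W t"] F2_eq_sqrt[of "\<theta> t" "W t"] \<open>0 < D\<close> s(1)
    by (simp_all add: D_def s(2)[symmetric] mult.assoc)
  have "(\<beta> * sqrt \<beta> * sin (\<theta> t) - cos (\<theta> t)) / (d * sin (\<theta> t) * cos (\<theta> t)) * F1 \<alpha> d \<beta> (\<theta> t) (W t)
      - \<alpha> * sqrt \<beta> * D' / (2 * D * sqrt D) = 0"
    unfolding D'_def F
    using \<open>0 < D\<close> d_pos th s by (simp add: field_simps power2_eq_square)
  ultimately show ?thesis by simp
qed

lemma potential_lower_bounds: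
  assumes "0 < \<theta>" "\<theta> < pi/2"
  shows "0 \<le> potential \<theta>" "- ln \<theta> / d \<le> potential \<theta>" "- ln (cos \<theta>) / d \<le> potential \<theta>"
proof -
  have "0 < sin \<theta>" "0 < cos \<theta>" using assms by (auto intro: sin_gt_zero cos_gt_zero)
  have "1 * 1 \<le> \<beta> * sqrt \<beta>" using beta_ge_1 by (intro mult_mono) auto
  moreover have "0 \<le> - ln (cos \<theta>)" using \<open>0 < cos \<theta>\<close> by simp
  ultimately have "- ln (cos \<theta>) \<le> \<beta> * sqrt \<beta> * ln ((1 + sin \<theta>) / cos \<theta>)"
    using ln_one_plus_sin_div_cos_ge[of \<theta>] \<open>0 < sin \<theta>\<close> \<open>0 < cos \<theta>\<close>
    by (smt (verit) mult_le_cancel_right1 mult_right_mono)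
  moreover have "potential \<theta> = (\<beta> * sqrt \<beta> * ln ((1 + sin \<theta>) / cos \<theta>) - ln (sin \<theta> / (1 + cos \<theta>))) / d"
    by (simp add: potential_def diff_divide_distrib)
  ultimately have "0 / d \<le> potential \<theta>" "- ln \<theta> / d \<le> potential \<theta>" "- ln (cos \<theta>) / d \<le> potential \<theta>"
    using ln_sin_div_one_plus_cos_le[OF assms] \<open>0 \<le> - ln (cos \<theta>)\<close> d_pos
    by (simp_all only:) (intro divide_right_mono; linarith)+
  then show "0 \<le> potential \<theta>" "- ln \<theta> / d \<le> potential \<theta>" "- ln (cos \<theta>) / d \<le> potential \<theta>"
    by simp_all
qed

lemma hamiltonian_lower_bounds:
  assumes "(\<theta>, W) \<in> Omega_beta \<beta>"
  shows "potential \<theta> \<le> hamiltonian \<theta> W" "\<alpha> * sqrt \<beta> / sqrt (D_beta d \<beta> \<theta> W) \<le> hamiltonian \<theta> W"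
  using D_beta_pos[OF assms] alpha_pos sqrt_beta
    potential_lower_bounds(1)[OF Omega_betaD(1,2)[OF assms]]
  by (auto simp: hamiltonian_def)

lemma sublevel_bounds:
  assumes \<Omega>: "(\<theta>, W) \<in> Omega_beta \<beta>" and H: "hamiltonian \<theta> W \<le> H0"
  shows "exp (- (d * H0)) \<le> \<theta>" "exp (- (d * H0)) \<le> cos \<theta>"
    "(\<alpha> * sqrt \<beta> / H0)\<^sup>2 \<le> D_beta d \<beta> \<theta> W"
proof -
  note th = Omega_betaD[OF \<Omega>]
  have D: "0 < D_beta d \<beta> \<theta> W" by (rule D_beta_pos[OF \<Omega>])
  have G: "potential \<theta> \<le> H0" using hamiltonian_lower_bounds(1)[OF \<Omega>] H by linarith
  then have "- ln \<theta> / d \<le> H0" "- ln (cos \<theta>) / d \<le> H0"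
    using potential_lower_bounds(2,3)[OF th(1,2)] by linarith+
  then have "- (d * H0) \<le> ln \<theta>" "- (d * H0) \<le> ln (cos \<theta>)"
    using d_pos by (auto simp: field_simps)
  then show "exp (- (d * H0)) \<le> \<theta>" "exp (- (d * H0)) \<le> cos \<theta>"
    using th by (metis exp_le_cancel_iff exp_ln)+
  have a: "\<alpha> * sqrt \<beta> / sqrt (D_beta d \<beta> \<theta> W) \<le> H0"
    using hamiltonian_lower_bounds(2)[OF \<Omega>] H by linarith
  moreover have "0 < \<alpha> * sqrt \<beta> / sqrt (D_beta d \<beta> \<theta> W)" using alpha_pos sqrt_beta D by simp
  ultimately have "0 < H0" by linarith
  then have "\<alpha> * sqrt \<beta> / H0 \<le> sqrt (D_beta d \<beta> \<theta> W)"
    using a D by (simp add: divide_simps mult.commute)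
  then have "(\<alpha> * sqrt \<beta> / H0)\<^sup>2 \<le> (sqrt (D_beta d \<beta> \<theta> W))\<^sup>2"
    using alpha_pos sqrt_beta \<open>0 < H0\<close> by (intro power_mono) auto
  then show "(\<alpha> * sqrt \<beta> / H0)\<^sup>2 \<le> D_beta d \<beta> \<theta> W" using D by simp
qed

definition confines :: "real \<Rightarrow> real \<Rightarrow> real \<Rightarrow> real \<Rightarrow> bool" where
  "confines a b \<delta> H0 \<longleftrightarrow> 0 < a \<and> b < pi/2 \<and> 0 < \<delta> \<and>
    (\<forall>\<theta> W. (\<theta>, W) \<in> Omega_beta \<beta> \<longrightarrow> hamiltonian \<theta> W \<le> H0 \<longrightarrow>
      a < \<theta> \<and> \<theta> < b \<and> \<delta> < D_beta d \<beta> \<theta> W)"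

lemma confinesD:
  assumes "confines a b \<delta> H0"
  shows "0 < a" "b < pi/2" "0 < \<delta>"
    and "(\<theta>, W) \<in> Omega_beta \<beta> \<Longrightarrow> hamiltonian \<theta> W \<le> H0 \<Longrightarrow> a < \<theta> \<and> \<theta> < b \<and> \<delta> < D_beta d \<beta> \<theta> W"
  using assms by (auto simp: confines_def)

lemma confines_exists:
  assumes \<Omega>: "(\<theta>0, W0) \<in> Omega_beta \<beta>"
  shows "\<exists>a b \<delta>. confines a b \<delta> (hamiltonian \<theta>0 W0)"
proof -
  define H0 where "H0 = hamiltonian \<theta>0 W0"
  have "0 < \<alpha> * sqrt \<beta> / sqrt (D_beta d \<beta> \<theta>0 W0)"
    using alpha_pos sqrt_beta D_beta_pos[OF \<Omega>] by simp
  then have "0 < H0" using hamiltonian_lower_bounds(2)[OF \<Omega>] by (simp add: H0_def)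
  define e where "e = exp (- (d * H0))"
  have e: "0 < e" "e < 1" using d_pos \<open>0 < H0\<close> by (auto simp: e_def)
  define b where "b = arccos (e / 2)"
  have b: "0 \<le> b" "b \<le> pi" "cos b = e / 2"
    using arccos[of "e / 2"] e by (auto simp: b_def)
  have "b < pi / 2"
  proof (rule ccontr)
    assume "\<not> b < pi / 2"
    then have "cos b \<le> cos (pi / 2)" using b by (intro cos_monotone_0_pi_le) auto
    then show False using b e by simp
  qed
  define \<delta> where "\<delta> = (\<alpha> * sqrt \<beta> / H0)\<^sup>2 / 2"
  have "0 < \<delta>" using alpha_pos sqrt_beta \<open>0 < H0\<close> by (simp add: \<delta>_def)
  have "e / 2 < \<theta> \<and> \<theta> < b \<and> \<delta> < D_beta d \<beta> \<theta> W"
    if \<Omega>: "(\<theta>, W) \<in> Omega_beta \<beta>" and H: "hamiltonian \<theta> W \<le> H0" for \<theta> W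
  proof (intro conjI)
    note bounds = sublevel_bounds[OF \<Omega> H, folded e_def]
    show "e / 2 < \<theta>" using bounds(1) e by simp
    show "\<theta> < b"
    proof (rule ccontr)
      assume "\<not> \<theta> < b"
      then have "cos \<theta> \<le> cos b"
        using b Omega_betaD[OF \<Omega>] by (intro cos_monotone_0_pi_le) auto
      then show False using bounds(2) b e by linarith
    qed
    show "\<delta> < D_beta d \<beta> \<theta> W" using bounds(3) \<open>0 < \<delta>\<close> unfolding \<delta>_def by linarith
  qed
  then have "confines (e / 2) b \<delta> H0"
    using e \<open>b < pi / 2\<close> \<open>0 < \<delta>\<close> by (simp add: confines_def)
  then show ?thesis unfolding H0_def by blast
qed

lemma box_subset_Omega_beta:
  assumes "0 < a" "b < pi/2" "0 < \<delta>" "a \<le> \<theta>" "\<theta> \<le> b" "\<delta> \<le> D_beta d \<beta> \<theta> W"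
  shows "(\<theta>, W) \<in> Omega_beta \<beta>"
  using assms D_beta_theta_beta by (auto simp: Omega_beta_def)

text \<open>Outside the box \<open>a \<le> \<theta> \<le> b, D\<^sub>\<beta> \<ge> \<delta>\<close> the field is modified by clamping \<open>\<theta>\<close> to \<open>[a, b]\<close>
  and flooring \<open>D\<^sub>\<beta>\<close> at \<open>\<delta>\<close>.\<close>

definition D_floor :: "real \<Rightarrow> real \<Rightarrow> real \<Rightarrow> real \<times> real \<Rightarrow> real" where
  "D_floor a b \<delta> p = max \<delta> (D_beta d \<beta> (clamp a b (fst p)) (snd p))"

definition F1_trunc :: "real \<Rightarrow> real \<Rightarrow> real \<Rightarrow> real \<times> real \<Rightarrow> real" where
  "F1_trunc a b \<delta> p = \<alpha> * sqrt \<beta> * snd p * (1 / (D_floor a b \<delta> p * sqrt (D_floor a b \<delta> p)))"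

definition F2_trunc :: "real \<Rightarrow> real \<Rightarrow> real \<Rightarrow> real \<times> real \<Rightarrow> real" where
  "F2_trunc a b \<delta> p = (\<beta> * sqrt \<beta> * sin (clamp a b (fst p)) - cos (clamp a b (fst p)))
      * (1 / (d * sin (clamp a b (fst p)) * cos (clamp a b (fst p))))
    - \<alpha> * d\<^sup>2 / sqrt \<beta> * (sin (clamp a b (fst p)) + sqrt \<beta> * cos (clamp a b (fst p)))
      * (sqrt \<beta> * sin (clamp a b (fst p)) - cos (clamp a b (fst p)))
      * (1 / (D_floor a b \<delta> p * sqrt (D_floor a b \<delta> p)))"

definition F_trunc :: "real \<Rightarrow> real \<Rightarrow> real \<Rightarrow> real \<times> real \<Rightarrow> real \<times> real" where
  "F_trunc a b \<delta> p = (F1_trunc a b \<delta> p, F2_trunc a b \<delta> p)"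

lemma F_trunc_eq:
  assumes "0 < a" "b < pi/2" "0 < \<delta>" "a \<le> \<theta>" "\<theta> \<le> b" "\<delta> \<le> D_beta d \<beta> \<theta> W"
  shows "F_trunc a b \<delta> (\<theta>, W) = (F1 \<alpha> d \<beta> \<theta> W, F2 \<alpha> d \<beta> \<theta> W)"
proof -
  have "clamp a b \<theta> = \<theta>" "D_floor a b \<delta> (\<theta>, W) = D_beta d \<beta> \<theta> W"
    using assms by (auto simp: clamp_def D_floor_def)
  moreover have "0 < D_beta d \<beta> \<theta> W" using assms by linarith
  ultimately show ?thesis
    using sqrt_beta d_pos
    by (simp add: F_trunc_def F1_trunc_def F2_trunc_def F1_eq_sqrt F2_eq_sqrt field_simps)
qed

lemma D_floor_lower_bounds: "\<delta> \<le> D_floor a b \<delta> p" "(snd p)\<^sup>2 \<le> D_floor a b \<delta> p"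
  using sqrt_beta by (auto simp: D_floor_def D_beta_def le_max_iff_disj)

lemma bounded_lipschitz_on_inverse_D_floor:
  assumes "0 < \<delta>"
  shows "bounded_lipschitz_on (cball 0 R) (\<lambda>p. 1 / (D_floor a b \<delta> p * sqrt (D_floor a b \<delta> p)))"
proof -
  let ?S = "cball (0::real \<times> real) R"
  have "bounded_lipschitz_on ?S (\<lambda>p. D_beta d \<beta> (clamp a b (fst p)) (snd p))"
    unfolding D_beta_def
    by (intro bounded_lipschitz_on_add bounded_lipschitz_on_mult bounded_lipschitz_on_power2
        bounded_lipschitz_on_diff bounded_lipschitz_on_const bounded_lipschitz_on_sin_cos_clamp
        bounded_lipschitz_on_snd) auto
  then have D: "bounded_lipschitz_on ?S (D_floor a b \<delta>)"
    unfolding D_floor_def by (rule bounded_lipschitz_on_compose[OF _ lipschitz_on_max]) auto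
  have "bounded_lipschitz_on ?S (\<lambda>p. D_floor a b \<delta> p * sqrt (D_floor a b \<delta> p))"
    by (intro bounded_lipschitz_on_mult D bounded_lipschitz_on_compose[OF D lipschitz_on_sqrt_atLeast])
       (use assms D_floor_lower_bounds in auto)
  then show ?thesis
  proof (rule bounded_lipschitz_on_compose[OF _ lipschitz_on_inverse_atLeast])
    show "0 < \<delta> * sqrt \<delta>" using assms by simp
    show "D_floor a b \<delta> p * sqrt (D_floor a b \<delta> p) \<in> {\<delta> * sqrt \<delta>..}" for p
      using D_floor_lower_bounds(1)[of \<delta> a b p] assms by (auto intro!: mult_mono)
  qed
qed

lemma F_trunc_lipschitz:
  assumes ab: "0 < a" "a \<le> b" "b < pi/2" and "0 < \<delta>"
  shows "\<exists>L. L-lipschitz_on (cball 0 R) (F_trunc a b \<delta>)"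
proof -
  let ?S = "cball (0::real \<times> real) R"
  note sc = clamp_sin_cos_bounds[OF ab]
  note sin_cos = bounded_lipschitz_on_sin_cos_clamp[of R a b]
  have "bounded_lipschitz_on ?S (\<lambda>p. d * sin (clamp a b (fst p)) * cos (clamp a b (fst p)))"
    by (intro bounded_lipschitz_on_mult bounded_lipschitz_on_const sin_cos)
  then have "bounded_lipschitz_on ?S (\<lambda>p. 1 / (d * sin (clamp a b (fst p)) * cos (clamp a b (fst p))))"
  proof (rule bounded_lipschitz_on_compose[OF _ lipschitz_on_inverse_atLeast])
    show "0 < d * sin a * cos b" using d_pos sc by simp
    show "d * sin (clamp a b (fst p)) * cos (clamp a b (fst p)) \<in> {d * sin a * cos b..}" for p
      using sc(1,3) sc(2,4,5,6)[of "fst p"] d_pos by (auto intro!: mult_mono)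
  qed
  then have "bounded_lipschitz_on ?S (F1_trunc a b \<delta>)" "bounded_lipschitz_on ?S (F2_trunc a b \<delta>)"
    unfolding F1_trunc_def F2_trunc_def
    by (intro bounded_lipschitz_on_mult bounded_lipschitz_on_diff bounded_lipschitz_on_add
        bounded_lipschitz_on_const sin_cos bounded_lipschitz_on_snd[of ?S R]
        bounded_lipschitz_on_inverse_D_floor \<open>0 < \<delta>\<close> order_refl)+
  then obtain L1 L2 where "L1-lipschitz_on ?S (F1_trunc a b \<delta>)" "L2-lipschitz_on ?S (F2_trunc a b \<delta>)"
    unfolding bounded_lipschitz_on_def by blast
  from lipschitz_on_Pair[OF this] show ?thesis unfolding F_trunc_def by blast
qed

lemma abs_F1_trunc_le:
  assumes "0 < \<delta>"
  shows "\<bar>F1_trunc a b \<delta> p\<bar> \<le> \<alpha> * sqrt \<beta> / \<delta>"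
proof -
  define D where "D = D_floor a b \<delta> p"
  have "\<delta> \<le> D" "(snd p)\<^sup>2 \<le> D" unfolding D_def by (rule D_floor_lower_bounds)+
  then have "0 < D" "\<bar>snd p\<bar> \<le> sqrt D" using assms real_sqrt_le_mono by fastforce+
  have "\<bar>F1_trunc a b \<delta> p\<bar> = \<alpha> * sqrt \<beta> * \<bar>snd p\<bar> / (D * sqrt D)"
    using alpha_pos sqrt_beta \<open>0 < D\<close> by (simp add: F1_trunc_def abs_mult D_def)
  also have "\<dots> \<le> \<alpha> * sqrt \<beta> * sqrt D / (D * sqrt D)"
    using alpha_pos sqrt_beta \<open>0 < D\<close> \<open>\<bar>snd p\<bar> \<le> sqrt D\<close> by (intro divide_right_mono mult_left_mono) auto
  also have "\<dots> \<le> \<alpha> * sqrt \<beta> / \<delta>"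
    using alpha_pos sqrt_beta \<open>\<delta> \<le> D\<close> assms by (simp add: divide_left_mono)
  finally show ?thesis .
qed

lemma abs_F2_trunc_le:
  assumes ab: "0 < a" "a \<le> b" "b < pi/2" and "0 < \<delta>"
  shows "\<bar>F2_trunc a b \<delta> p\<bar> \<le> (\<beta> * sqrt \<beta> + 1) / (d * sin a * cos b)
    + \<alpha> * d\<^sup>2 / sqrt \<beta> * (1 + sqrt \<beta>)\<^sup>2 / (\<delta> * sqrt \<delta>)"
proof -
  note sc = clamp_sin_cos_bounds(1,3)[OF ab] clamp_sin_cos_bounds(2,4,5,6)[OF ab, of "fst p"]
  define s where "s = sqrt \<beta>"
  have "0 < s" "0 \<le> \<beta> * s" using sqrt_beta by (auto simp: s_def)
  define c where "c = clamp a b (fst p)"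
  define D where "D = D_floor a b \<delta> p"
  have "\<delta> \<le> D" unfolding D_def by (rule D_floor_lower_bounds)
  then have D32: "\<bar>1 / (D * sqrt D)\<bar> \<le> 1 / (\<delta> * sqrt \<delta>)"
    using \<open>0 < \<delta>\<close> by (auto intro!: divide_left_mono mult_mono)
  have "d * sin a * cos b \<le> d * sin c * cos c"
    unfolding c_def using d_pos sc by (intro mult_mono) auto
  moreover have "0 < d * sin a * cos b" "0 < d * sin c * cos c" using d_pos sc by (simp_all add: c_def)
  ultimately have sc_inv: "\<bar>1 / (d * sin c * cos c)\<bar> \<le> 1 / (d * sin a * cos b)"
    by (auto intro!: divide_left_mono)
  have k: "\<bar>k * sin c\<bar> \<le> k" "\<bar>k * cos c\<bar> \<le> k" if "0 \<le> k" for k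
    using that by (simp_all add: abs_mult mult_left_le)
  have "\<bar>\<beta> * s * sin c - cos c\<bar> \<le> \<beta> * s + 1"
    using abs_triangle_ineq4[of "\<beta> * s * sin c" "cos c"] k(1)[OF \<open>0 \<le> \<beta> * s\<close>] abs_cos_le_one[of c]
    by linarith
  moreover have "\<bar>sin c + s * cos c\<bar> \<le> 1 + s"
    using abs_triangle_ineq[of "sin c" "s * cos c"] k(2)[of s] \<open>0 < s\<close> abs_sin_le_one[of c]
    by linarith
  moreover have "\<bar>s * sin c - cos c\<bar> \<le> 1 + s"
    using abs_triangle_ineq4[of "s * sin c" "cos c"] k(1)[of s] \<open>0 < s\<close> abs_cos_le_one[of c]
    by linarith
  ultimately have "\<bar>\<beta> * s * sin c - cos c\<bar> * \<bar>1 / (d * sin c * cos c)\<bar>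
      + \<alpha> * d\<^sup>2 / s * \<bar>sin c + s * cos c\<bar> * \<bar>s * sin c - cos c\<bar> * \<bar>1 / (D * sqrt D)\<bar>
      \<le> (\<beta> * s + 1) * (1 / (d * sin a * cos b)) + \<alpha> * d\<^sup>2 / s * (1 + s) * (1 + s) * (1 / (\<delta> * sqrt \<delta>))"
    using sc_inv D32 alpha_pos \<open>0 < s\<close> by (intro add_mono mult_mono) auto
  moreover have "\<bar>F2_trunc a b \<delta> p\<bar> \<le> \<bar>(\<beta> * s * sin c - cos c) * (1 / (d * sin c * cos c))\<bar>
      + \<bar>\<alpha> * d\<^sup>2 / s * (sin c + s * cos c) * (s * sin c - cos c) * (1 / (D * sqrt D))\<bar>"
    unfolding F2_trunc_def c_def[symmetric] D_def[symmetric] s_def[symmetric]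
    by (rule abs_triangle_ineq4)
  moreover have "\<dots> = \<bar>\<beta> * s * sin c - cos c\<bar> * \<bar>1 / (d * sin c * cos c)\<bar>
      + \<alpha> * d\<^sup>2 / s * \<bar>sin c + s * cos c\<bar> * \<bar>s * sin c - cos c\<bar> * \<bar>1 / (D * sqrt D)\<bar>"
    using alpha_pos \<open>0 < s\<close> by (simp only: abs_mult) simp
  ultimately have "\<bar>F2_trunc a b \<delta> p\<bar> \<le> (\<beta> * s + 1) * (1 / (d * sin a * cos b))
      + \<alpha> * d\<^sup>2 / s * (1 + s) * (1 + s) * (1 / (\<delta> * sqrt \<delta>))"
    by linarith
  then show ?thesis by (simp add: s_def power2_eq_square mult.assoc)
qed

lemma F_trunc_bounded:
  assumes "0 < a" "a \<le> b" "b < pi/2" "0 < \<delta>"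
  shows "\<exists>C. \<forall>p. norm (F_trunc a b \<delta> p) \<le> C"
proof -
  have "norm (F_trunc a b \<delta> p) \<le> \<bar>F1_trunc a b \<delta> p\<bar> + \<bar>F2_trunc a b \<delta> p\<bar>" for p
    unfolding F_trunc_def norm_Pair by (simp add: sqrt_sum_squares_le_sum_abs)
  then show ?thesis
    using abs_F1_trunc_le[OF assms(4)] abs_F2_trunc_le[OF assms] by (meson add_mono order_trans)
qed

lemma continuous_on_hamiltonian:
  "continuous_on (Omega_beta \<beta>) (\<lambda>p. hamiltonian (fst p) (snd p))"
proof -
  have pos: "0 < sin (fst p)" "0 < cos (fst p)" "0 < D_beta d \<beta> (fst p) (snd p)"
    if "p \<in> Omega_beta \<beta>" for p
    using that Omega_betaD[of "fst p" "snd p"] D_beta_pos[of "fst p" "snd p"] by auto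
  have "continuous_on (Omega_beta \<beta>) (\<lambda>p. D_beta d \<beta> (fst p) (snd p))"
    unfolding D_beta_def by (intro continuous_intros)
  then show ?thesis
    unfolding hamiltonian_def potential_def
    by (intro continuous_intros) (auto dest: pos)
qed

lemma F_trunc_solution_components:
  assumes x: "(x has_vector_derivative F_trunc a b \<delta> (x t)) (at t)"
    and "0 < a" "b < pi/2" "0 < \<delta>"
    and "a \<le> fst (x t)" "fst (x t) \<le> b" "\<delta> \<le> D_beta d \<beta> (fst (x t)) (snd (x t))"
  shows "((\<lambda>t. fst (x t)) has_real_derivative F1 \<alpha> d \<beta> (fst (x t)) (snd (x t))) (at t)"
    "((\<lambda>t. snd (x t)) has_real_derivative F2 \<alpha> d \<beta> (fst (x t)) (snd (x t))) (at t)"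
  using has_real_derivative_fst[OF x] has_real_derivative_snd[OF x]
    F_trunc_eq[of a b \<delta> "fst (x t)" "snd (x t)"] assms(2-)
  by simp_all

lemma closed_level_set:
  assumes "confines a b \<delta> H0"
  shows "closed {p \<in> Omega_beta \<beta>. hamiltonian (fst p) (snd p) = H0}"
proof -
  define K where "K = {p. a \<le> fst p \<and> fst p \<le> b \<and> \<delta> \<le> D_beta d \<beta> (fst p) (snd p)}"
  have "closed K" unfolding K_def D_beta_def
    by (intro closed_Collect_conj closed_Collect_le continuous_intros)
  moreover have "K \<subseteq> Omega_beta \<beta>"
    using assms box_subset_Omega_beta by (auto simp: K_def confines_def)
  ultimately have "closed {p \<in> K. hamiltonian (fst p) (snd p) = H0}"
    by (intro continuous_closed_preimage_constant continuous_on_subset[OF continuous_on_hamiltonian])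
  moreover have "{p \<in> K. hamiltonian (fst p) (snd p) = H0}
      = {p \<in> Omega_beta \<beta>. hamiltonian (fst p) (snd p) = H0}"
    using assms \<open>K \<subseteq> Omega_beta \<beta>\<close> by (fastforce simp: K_def confines_def)
  ultimately show ?thesis by simp
qed

text \<open>The set of times at which a solution of the truncated system lies on the level set of
  its initial point is closed by the previous lemma, and open since near such times the
  truncated and the original system agree and the Hamiltonian is conserved.\<close>

lemma F_trunc_solution_on_level_set:
  assumes conf: "confines a b \<delta> (hamiltonian \<theta>0 W0)" and \<Omega>: "(\<theta>0, W0) \<in> Omega_beta \<beta>"
    and x: "\<And>t. (x has_vector_derivative F_trunc a b \<delta> (x t)) (at t)" and x0: "x 0 = (\<theta>0, W0)"
  shows "x t \<in> Omega_beta \<beta> \<and> hamiltonian (fst (x t)) (snd (x t)) = hamiltonian \<theta>0 W0"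
proof -
  define H0 where "H0 = hamiltonian \<theta>0 W0"
  define T where "T = x -` {p \<in> Omega_beta \<beta>. hamiltonian (fst p) (snd p) = H0}"
  have x_cont: "continuous_on UNIV x"
    using has_vector_derivative_continuous[OF x] by (simp add: continuous_at_imp_continuous_on)
  have "closed T"
    unfolding T_def by (rule closed_vimage[OF closed_level_set[OF conf[folded H0_def]] x_cont])
  moreover have "open T"
    unfolding open_contains_ball
  proof
    fix t assume "t \<in> T"
    define U where "U = {p. a < fst p \<and> fst p < b \<and> \<delta> < D_beta d \<beta> (fst p) (snd p)}"
    have "open U" unfolding U_def D_beta_def
      by (intro open_Collect_conj open_Collect_less continuous_intros)
    then have "open (x -` U)" using x_cont by (rule open_vimage)
    moreover have "t \<in> x -` U"
      using confinesD(4)[OF conf, of "fst (x t)" "snd (x t)"] \<open>t \<in> T\<close> by (simp add: U_def T_def H0_def)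
    ultimately obtain \<epsilon> where "0 < \<epsilon>" "ball t \<epsilon> \<subseteq> x -` U" by (rule openE)
    then have \<epsilon>: "\<And>s. s \<in> ball t \<epsilon> \<Longrightarrow> x s \<in> U" by blast
    note box = confinesD(1-3)[OF conf]
    have \<Omega>s: "x s \<in> Omega_beta \<beta>" if "s \<in> ball t \<epsilon>" for s
      using box_subset_Omega_beta[OF box, of "fst (x s)" "snd (x s)"] \<epsilon>[OF that] by (auto simp: U_def)
    have "((\<lambda>s. hamiltonian (fst (x s)) (snd (x s))) has_real_derivative 0) (at s)"
      if "s \<in> ball t \<epsilon>" for s
    proof -
      have "a \<le> fst (x s)" "fst (x s) \<le> b" "\<delta> \<le> D_beta d \<beta> (fst (x s)) (snd (x s))"
        using \<epsilon>[OF that] by (auto simp: U_def)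
      from F_trunc_solution_components[OF x box this] show ?thesis
        by (rule hamiltonian_conserved) (use \<Omega>s[OF that] in simp)
    qed
    then have "\<exists>c. \<forall>s\<in>ball t \<epsilon>. hamiltonian (fst (x s)) (snd (x s)) = c"
      by (intro has_field_derivative_zero_constant[OF convex_ball]) (auto intro: has_field_derivative_at_within)
    then obtain c where "\<And>s. s \<in> ball t \<epsilon> \<Longrightarrow> hamiltonian (fst (x s)) (snd (x s)) = c" by blast
    moreover have "hamiltonian (fst (x t)) (snd (x t)) = H0" using \<open>t \<in> T\<close> by (simp add: T_def)
    ultimately have "ball t \<epsilon> \<subseteq> T" using \<Omega>s \<open>0 < \<epsilon>\<close> by (auto simp: T_def)
    then show "\<exists>\<epsilon>>0. ball t \<epsilon> \<subseteq> T" using \<open>0 < \<epsilon>\<close> by blast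
  qed
  moreover have "0 \<in> T" using x0 \<Omega> by (simp add: T_def H0_def)
  ultimately have "t \<in> T" using clopen[of T] by auto
  then show ?thesis by (simp add: T_def H0_def)
qed

lemma solution_solves_F_trunc:
  assumes conf: "confines a b \<delta> (hamiltonian (\<theta> 0) (W 0))"
    and \<Omega>: "\<And>t. (\<theta> t, W t) \<in> Omega_beta \<beta>"
    and \<theta>: "\<And>t. (\<theta> has_real_derivative F1 \<alpha> d \<beta> (\<theta> t) (W t)) (at t)"
    and W: "\<And>t. (W has_real_derivative F2 \<alpha> d \<beta> (\<theta> t) (W t)) (at t)"
  shows "((\<lambda>t. (\<theta> t, W t)) has_vector_derivative F_trunc a b \<delta> (\<theta> t, W t)) (at t)"
proof -
  have "hamiltonian (\<theta> t) (W t) = hamiltonian (\<theta> 0) (W 0)"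
    by (rule DERIV_isconst_all) (use hamiltonian_conserved[OF \<theta> W \<Omega>] in blast)
  then have "F_trunc a b \<delta> (\<theta> t, W t) = (F1 \<alpha> d \<beta> (\<theta> t) (W t), F2 \<alpha> d \<beta> (\<theta> t) (W t))"
    using confinesD(1-3)[OF conf] confinesD(4)[OF conf \<Omega>[of t]] by (intro F_trunc_eq) auto
  then show ?thesis
    using \<theta> W by (auto intro!: has_vector_derivative_Pair simp flip: has_real_derivative_iff_has_vector_derivative)
qed

lemma solutions_unique:
  assumes "(\<theta>0, W0) \<in> Omega_beta \<beta>"
    and "\<theta>1 0 = \<theta>0" "W1 0 = W0" "\<And>t. (\<theta>1 t, W1 t) \<in> Omega_beta \<beta>"
    "\<And>t. (\<theta>1 has_real_derivative F1 \<alpha> d \<beta> (\<theta>1 t) (W1 t)) (at t)"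
    "\<And>t. (W1 has_real_derivative F2 \<alpha> d \<beta> (\<theta>1 t) (W1 t)) (at t)"
    and "\<theta>2 0 = \<theta>0" "W2 0 = W0" "\<And>t. (\<theta>2 t, W2 t) \<in> Omega_beta \<beta>"
    "\<And>t. (\<theta>2 has_real_derivative F1 \<alpha> d \<beta> (\<theta>2 t) (W2 t)) (at t)"
    "\<And>t. (W2 has_real_derivative F2 \<alpha> d \<beta> (\<theta>2 t) (W2 t)) (at t)"
  shows "\<theta>1 = \<theta>2 \<and> W1 = W2"
proof -
  obtain a b \<delta> where conf: "confines a b \<delta> (hamiltonian \<theta>0 W0)"
    using confines_exists[OF assms(1)] by blast
  have "a \<le> b" using confinesD(4)[OF conf assms(1)] by simp
  have lip: "\<exists>L. L-lipschitz_on (cball 0 R) (F_trunc a b \<delta>)" for R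
    using F_trunc_lipschitz confinesD(1-3)[OF conf] \<open>a \<le> b\<close> by blast
  have "((\<lambda>t. (\<theta>1 t, W1 t)) has_vector_derivative F_trunc a b \<delta> (\<theta>1 t, W1 t)) (at t)"
    "((\<lambda>t. (\<theta>2 t, W2 t)) has_vector_derivative F_trunc a b \<delta> (\<theta>2 t, W2 t)) (at t)" for t
    by (intro solution_solves_F_trunc; use assms conf in simp)+
  then have "(\<theta>1 t, W1 t) = (\<theta>2 t, W2 t)" for t
    by (rule ode_solutions_eq_of_local_lipschitz[OF lip, where a="- \<bar>t\<bar>" and b="\<bar>t\<bar>" and \<tau>=0])
      (use assms in \<open>auto simp: abs_if\<close>)
  then show ?thesis by auto
qed

lemma solution_exists:
  assumes \<Omega>: "(\<theta>0, W0) \<in> Omega_beta \<beta>"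
  shows "\<exists>\<theta> W. \<theta> \<in> C1_functions \<and> W \<in> C1_functions \<and> \<theta> 0 = \<theta>0 \<and> W 0 = W0 \<and>
    (\<forall>t. (\<theta> t, W t) \<in> Omega_beta \<beta>) \<and>
    (\<forall>t. (\<theta> has_real_derivative F1 \<alpha> d \<beta> (\<theta> t) (W t)) (at t)) \<and>
    (\<forall>t. (W has_real_derivative F2 \<alpha> d \<beta> (\<theta> t) (W t)) (at t))"
proof -
  obtain a b \<delta> where conf: "confines a b \<delta> (hamiltonian \<theta>0 W0)"
    using confines_exists[OF \<Omega>] by blast
  note box = confinesD(1-3)[OF conf]
  have "a \<le> b" using confinesD(4)[OF conf \<Omega>] by simp
  have lip: "\<exists>L. L-lipschitz_on (cball 0 R) (F_trunc a b \<delta>)" for R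
    using F_trunc_lipschitz box \<open>a \<le> b\<close> by blast
  obtain C where "\<And>p. norm (F_trunc a b \<delta> p) \<le> C"
    using F_trunc_bounded box \<open>a \<le> b\<close> by blast
  then obtain x where x0: "x 0 = (\<theta>0, W0)" and x: "\<And>t. (x has_vector_derivative F_trunc a b \<delta> (x t)) (at t)"
    using local_lipschitz_bounded_ode_global_solution[OF lip] by metis
  have inv: "x t \<in> Omega_beta \<beta>" "a \<le> fst (x t)" "fst (x t) \<le> b"
    "\<delta> \<le> D_beta d \<beta> (fst (x t)) (snd (x t))" for t
    using F_trunc_solution_on_level_set[OF conf \<Omega> x x0, of t]
      confinesD(4)[OF conf, of "fst (x t)" "snd (x t)"] by auto
  note x' = F_trunc_solution_components[OF x box inv(2-4)]
  have F_trunc: "F_trunc a b \<delta> (x t) = (F1 \<alpha> d \<beta> (fst (x t)) (snd (x t)), F2 \<alpha> d \<beta> (fst (x t)) (snd (x t)))" for t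
    using F_trunc_eq[OF box inv(2-4)] by simp
  have x_cont: "continuous_on UNIV x"
    using has_vector_derivative_continuous[OF x] by (simp add: continuous_at_imp_continuous_on)
  have "continuous_on UNIV (\<lambda>t. F_trunc a b \<delta> (x t))"
    using continuous_on_compose2[OF continuous_on_of_lipschitz_on_cball[OF lip]
        x_cont] by auto
  then have cont: "continuous_on UNIV (\<lambda>t. F1 \<alpha> d \<beta> (fst (x t)) (snd (x t)))"
    "continuous_on UNIV (\<lambda>t. F2 \<alpha> d \<beta> (fst (x t)) (snd (x t)))"
    unfolding F_trunc using continuous_on_fst continuous_on_snd by fastforce+
  have "(\<lambda>t. fst (x t)) \<in> C1_functions" by (rule C1_functionsI[OF x'(1) cont(1)])
  moreover have "(\<lambda>t. snd (x t)) \<in> C1_functions" by (rule C1_functionsI[OF x'(2) cont(2)])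
  ultimately show ?thesis
    using x' inv(1) x0
    by (intro exI[of _ "\<lambda>t. fst (x t)", OF exI[of _ "\<lambda>t. snd (x t)"]]) simp
qed

end

theorem theorem1:
  fixes \<alpha> d \<beta> \<theta>0 W0 :: real
  assumes "\<alpha> > 0" and "d > 0" and "\<beta> \<ge> 1"
    and "(\<theta>0, W0) \<in> Omega_beta \<beta>"
  shows "\<exists>!(\<theta>, W). \<theta> \<in> C1_functions \<and> W \<in> C1_functions \<and>
      \<theta> 0 = \<theta>0 \<and> W 0 = W0 \<and>
      (\<forall>t. (\<theta> t, W t) \<in> Omega_beta \<beta>) \<and>
      (\<forall>t. (\<theta> has_real_derivative F1 \<alpha> d \<beta> (\<theta> t) (W t)) (at t)) \<and>
      (\<forall>t. (W has_real_derivative F2 \<alpha> d \<beta> (\<theta> t) (W t)) (at t))"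
proof -
  interpret coaxial_vortices \<alpha> d \<beta> using assms(1-3) by unfold_locales
  obtain \<theta> W where sol: "\<theta> \<in> C1_functions" "W \<in> C1_functions" "\<theta> 0 = \<theta>0" "W 0 = W0"
    "\<And>t. (\<theta> t, W t) \<in> Omega_beta \<beta>"
    "\<And>t. (\<theta> has_real_derivative F1 \<alpha> d \<beta> (\<theta> t) (W t)) (at t)"
    "\<And>t. (W has_real_derivative F2 \<alpha> d \<beta> (\<theta> t) (W t)) (at t)"
    using solution_exists[OF assms(4)] by blast
  show ?thesis
  proof (rule ex1I[of _ "(\<theta>, W)"], goal_cases)
    case 1
    then show ?case using sol by simp
  next
    case (2 z)
    then show ?case using solutions_unique[OF assms(4), of "fst z" "snd z" \<theta> W] sol by (cases z) simp
  qed
qed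

end
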